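(* Let $\Sigma=(X,\mathcal{S},\phi)$ be a forward complete dynamical system and let $t_1>0$, $G_0>0$ be such that $$\|\phi(t,x,\sigma)\|\le G_0\|x\|\quad\text{for all } t\in[0,t_1],\ x\in X,\ \sigma\in\mathcal{S}.$$ Then the following statements are equivalent: (i) $\Sigma$ is UGES; (ii) for every $p>0$ there exists $k>0$ such that $\int_0^{+\infty}\|\phi(t,x,\sigma)\|^p\,dt\le k^p\|x\|^p$ for all $x\in X$, $\sigma\in\mathcal{S}$; (iii) there exist $p,k>0$ such that $\int_0^{+\infty}\|\phi(t,x,\sigma)\|^p\,dt\le k^p\|x\|^p$ for all $x\in X$, $\sigma\in\mathcal{S}$.
   Context: $(X,\|\cdot\|)$ is a Banach space. Let $\mathcal{Q}$ be a nonempty set and $\mathcal{S}$ a set of functions $\sigma:\mathbb{R}_+\to\mathcal{Q}$ which is closed by time-shift (for $\sigma\in\mathcal{S}$, $\tau\ge0$, the function $\mathbb{T}_\tau\sigma:s\mapsto\sigma(\tau+s)$ is in $\mathcal{S}$) and closed by concatenation (for $\sigma_1,\sigma_2\in\mathcal{S}$, $\tau>0$, the function equal to $\sigma_1$ on $[0,\tau]$ and with $\sigma(\tau+t)=\sigma_2(t)$ for $t>0$ is in $\mathcal{S}$). A triple $\Sigma=(X,\mathcal{S},\phi)$ with $\phi:\mathbb{R}_+\times X\times\mathcal{S}\to X$ is a forward complete dynamical system if: (i) $\phi(0,x,\sigma)=x$; (ii) if $\tilde\sigma=\sigma$ on $[0,t]$ then $\phi(t,x,\tilde\sigma)=\phi(t,x,\sigma)$;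 (iii) $t\mapsto\phi(t,x,\sigma)$ is continuous; (iv) $\phi(\tau,\phi(t,x,\sigma),\mathbb{T}_t\sigma)=\phi(t+\tau,x,\sigma)$ for all $t,\tau\ge0$, $x\in X$, $\sigma\in\mathcal{S}$. $\Sigma$ is uniformly globally exponentially stable at the origin (UGES) if there exist $M,\lambda>0$ such that $\|\phi(t,x,\sigma)\|\le Me^{-\lambda t}\|x\|$ for all $t\ge0$, $x\in X$, $\sigma\in\mathcal{S}$. *)

theory Defs
  imports "HOL-Analysis.Analysis"
begin

text \<open>Switching signals are modelled as functions real => 'q; only their values on
  [0,inf) are relevant. Closure properties are stated up to agreement on [0,inf).\<close>

definition shift_closed :: "(real \<Rightarrow> 'q) set \<Rightarrow> bool" where
  "shift_closed S \<longleftrightarrow>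
     (\<forall>\<sigma>\<in>S. \<forall>\<tau>\<ge>0. (\<lambda>s. \<sigma> (\<tau> + s)) \<in> S)"

definition concat_closed :: "(real \<Rightarrow> 'q) set \<Rightarrow> bool" where
  "concat_closed S \<longleftrightarrow>
     (\<forall>\<sigma>1\<in>S. \<forall>\<sigma>2\<in>S. \<forall>\<tau>>0. \<exists>\<sigma>\<in>S.
        (\<forall>s\<in>{0..\<tau>}. \<sigma> s = \<sigma>1 s) \<and> (\<forall>t>0. \<sigma> (\<tau> + t) = \<sigma>2 t))"

definition fc_dynamical_system ::
  "(real \<Rightarrow> 'q) set \<Rightarrow> (real \<Rightarrow> 'x::banach \<Rightarrow> (real \<Rightarrow> 'q) \<Rightarrow> 'x) \<Rightarrow> bool" where
  "fc_dynamical_system S \<phi> \<longleftrightarrow>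
     shift_closed S \<and> concat_closed S \<and>
     (\<forall>x. \<forall>\<sigma>\<in>S. \<phi> 0 x \<sigma> = x) \<and>
     (\<forall>t\<ge>0. \<forall>x. \<forall>\<sigma>\<in>S. \<forall>\<sigma>'\<in>S. (\<forall>s\<in>{0..t}. \<sigma>' s = \<sigma> s) \<longrightarrow> \<phi> t x \<sigma>' = \<phi> t x \<sigma>) \<and>
     (\<forall>x. \<forall>\<sigma>\<in>S. continuous_on {0..} (\<lambda>t. \<phi> t x \<sigma>)) \<and>
     (\<forall>t\<ge>0. \<forall>\<tau>\<ge>0. \<forall>x. \<forall>\<sigma>\<in>S.
        \<phi> \<tau> (\<phi> t x \<sigma>) (\<lambda>s. \<sigma> (t + s)) = \<phi> (t + \<tau>) x \<sigma>)"

definition UGES ::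
  "(real \<Rightarrow> 'q) set \<Rightarrow> (real \<Rightarrow> 'x::banach \<Rightarrow> (real \<Rightarrow> 'q) \<Rightarrow> 'x) \<Rightarrow> bool" where
  "UGES S \<phi> \<longleftrightarrow> (\<exists>M>0. \<exists>lam>0. \<forall>t\<ge>0. \<forall>x. \<forall>\<sigma>\<in>S.
      norm (\<phi> t x \<sigma>) \<le> M * exp (- lam * t) * norm x)"

definition Lp_bounded ::
  "(real \<Rightarrow> 'q) set \<Rightarrow> (real \<Rightarrow> 'x::banach \<Rightarrow> (real \<Rightarrow> 'q) \<Rightarrow> 'x) \<Rightarrow> real \<Rightarrow> real \<Rightarrow> bool" where
  "Lp_bounded S \<phi> p k \<longleftrightarrow> (\<forall>x. \<forall>\<sigma>\<in>S.
      (\<integral>\<^sup>+ t\<in>{0..}. ennreal (norm (\<phi> t x \<sigma>) powr p) \<partial>lborel)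
        \<le> ennreal (k powr p * norm x powr p))"

end

theory Submission
  imports Defs
begin

text \<open>Exponential decay is integrable, which gives (i) \<open>\<Longrightarrow>\<close> (ii). Conversely, suppose
  \<open>\<integral>\<^sub>0\<^sup>\<infinity> \<parallel>\<phi>(s)\<parallel>\<^sup>p ds \<le> k\<^sup>p \<parallel>x\<parallel>\<^sup>p\<close> and that over any time span of length at most \<open>\<tau>\<close> the
  flow grows by at most a factor \<open>B\<close>. Then \<open>\<parallel>\<phi>(s)\<parallel> \<ge> \<parallel>\<phi>(t)\<parallel> / B\<close> on the window
  \<open>[t - \<tau>, t]\<close>, so \<open>\<tau> (\<parallel>\<phi>(t)\<parallel> / B)\<^sup>p \<le> k\<^sup>p \<parallel>x\<parallel>\<^sup>p\<close>. With \<open>B = G0\<close>, \<open>\<tau> = t1\<close> this bounds the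
  flow uniformly by some \<open>C\<close>; with \<open>B = C\<close>, \<open>\<tau> = T = (2 C k)\<^sup>p\<close> it halves every state at
  time \<open>T\<close>. Iterating the halving through the semigroup property gives decay at rate
  \<open>ln 2 / T\<close>.\<close>

lemma powr_le_imp_le:
  fixes a b p :: real
  assumes "0 \<le> b" "0 < p" "a powr p \<le> b powr p"
  shows "a \<le> b"
  using assms powr_less_mono2[of p b a] by fastforce

lemma nn_integral_exp_neg_halfline:
  fixes a :: real
  assumes "a > 0"
  shows "(\<integral>\<^sup>+ t\<in>{0..}. ennreal (exp (- a * t)) \<partial>lborel) = ennreal (1 / a)"
proof -
  have "(\<integral>\<^sup>+ t. ennreal (indicator {0..} t * exp (- a * t)) \<partial>lborel) = ennreal (exp (- a * 0) / a)"
    by (rule nn_integral_has_integral_lebesgue)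
      (use has_integral_exp_minus_to_infinity[OF assms, of 0] in auto)
  then show ?thesis
    by (simp add: mult.commute indicator_mult_ennreal)
qed

lemma nn_integral_halfline_ge_interval:
  fixes f :: "real \<Rightarrow> real"
  assumes "0 \<le> a" "a \<le> b" "0 \<le> c" "\<And>s. s \<in> {a..b} \<Longrightarrow> c \<le> f s"
  shows "ennreal ((b - a) * c) \<le> (\<integral>\<^sup>+ t\<in>{0..}. ennreal (f t) \<partial>lborel)"
proof -
  have "ennreal ((b - a) * c) = (\<integral>\<^sup>+ t. ennreal c * indicator {a..b} t \<partial>lborel)"
    using assms by (simp add: nn_integral_cmult_indicator ennreal_mult' mult.commute)
  also have "\<dots> \<le> (\<integral>\<^sup>+ t\<in>{0..}. ennreal (f t) \<partial>lborel)"
    using assms by (intro nn_integral_mono) (auto split: split_indicator intro: ennreal_leI)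
  finally show ?thesis .
qed

lemma half_power_le_exp:
  fixes t T :: real and n :: nat
  assumes "T > 0" "t / T - 1 \<le> real n"
  shows "(1 / 2) ^ n \<le> 2 * exp (- (ln 2 / T) * t)"
proof -
  have "(1 / 2 :: real) ^ n = exp (- (real n * ln 2))"
    by (simp add: exp_minus exp_of_nat_mult power_one_over inverse_eq_divide)
  also have "\<dots> \<le> exp (- (ln 2 * (t / T - 1)))"
    using assms(2) by (simp add: mult.commute mult_left_mono)
  also have "\<dots> = exp (ln 2 + - (ln 2 / T) * t)"
    by (simp add: algebra_simps)
  also have "\<dots> = 2 * exp (- (ln 2 / T) * t)"
    by (simp only: exp_add) simp
  finally show ?thesis .
qed

lemma UGES_imp_Lp_bounded:
  assumes "UGES S \<phi>" "p > 0"
  shows "\<exists>k>0. Lp_bounded S \<phi> p k"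
proof -
  from assms(1) obtain M lam where "M > 0" "lam > 0"
    and decay: "\<And>t x \<sigma>. t \<ge> 0 \<Longrightarrow> \<sigma> \<in> S \<Longrightarrow> norm (\<phi> t x \<sigma>) \<le> M * exp (- lam * t) * norm x"
    unfolding UGES_def by blast
  define k where "k = M * (1 / (lam * p)) powr (1 / p)"
  have "k > 0"
    using \<open>M > 0\<close> \<open>lam > 0\<close> \<open>p > 0\<close> by (simp add: k_def)
  have k_powr: "k powr p = M powr p * (1 / (lam * p))"
    using \<open>M > 0\<close> \<open>lam > 0\<close> \<open>p > 0\<close> by (simp add: k_def powr_mult powr_powr)
  have "Lp_bounded S \<phi> p k"
    unfolding Lp_bounded_def
  proof (intro allI ballI)
    fix x \<sigma> assume "\<sigma> \<in> S"
    have pointwise: "norm (\<phi> t x \<sigma>) powr p \<le> M powr p * norm x powr p * exp (- (lam * p) * t)"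
      if "t \<ge> 0" for t
    proof -
      have "norm (\<phi> t x \<sigma>) powr p \<le> (M * exp (- lam * t) * norm x) powr p"
        using decay[OF that \<open>\<sigma> \<in> S\<close>] \<open>p > 0\<close> by (intro powr_mono2) auto
      also have "\<dots> = M powr p * norm x powr p * exp (- (lam * p) * t)"
        using \<open>M > 0\<close> by (simp add: powr_mult exp_powr_real mult_ac)
      finally show ?thesis .
    qed
    have "(\<integral>\<^sup>+ t\<in>{0..}. ennreal (norm (\<phi> t x \<sigma>) powr p) \<partial>lborel)
        \<le> (\<integral>\<^sup>+ t\<in>{0..}. ennreal (M powr p * norm x powr p) * ennreal (exp (- (lam * p) * t)) \<partial>lborel)"
      using pointwise
      by (intro nn_integral_mono) (auto split: split_indicator simp: ennreal_mult'[symmetric] ennreal_leI)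
    also have "\<dots> = ennreal (M powr p * norm x powr p)
        * (\<integral>\<^sup>+ t\<in>{0..}. ennreal (exp (- (lam * p) * t)) \<partial>lborel)"
      by (subst nn_integral_cmult[symmetric]) (auto simp: mult.assoc)
    also have "\<dots> = ennreal (M powr p * norm x powr p) * ennreal (1 / (lam * p))"
      using \<open>lam > 0\<close> \<open>p > 0\<close> by (subst nn_integral_exp_neg_halfline) auto
    also have "\<dots> = ennreal (k powr p * norm x powr p)"
      using \<open>M > 0\<close> \<open>lam > 0\<close> \<open>p > 0\<close> by (simp add: k_powr ennreal_mult'[symmetric] mult_ac)
    finally show "(\<integral>\<^sup>+ t\<in>{0..}. ennreal (norm (\<phi> t x \<sigma>) powr p) \<partial>lborel) \<le> ennreal (k powr p * norm x powr p)" .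
  qed
  with \<open>k > 0\<close> show ?thesis by blast
qed

locale fc_system =
  fixes S :: "(real \<Rightarrow> 'q) set"
    and \<phi> :: "real \<Rightarrow> 'x::banach \<Rightarrow> (real \<Rightarrow> 'q) \<Rightarrow> 'x"
  assumes fc_dynamical_system: "fc_dynamical_system S \<phi>"
begin

lemma shift_in_signals: "\<sigma> \<in> S \<Longrightarrow> \<tau> \<ge> 0 \<Longrightarrow> (\<lambda>s. \<sigma> (\<tau> + s)) \<in> S"
  using fc_dynamical_system unfolding fc_dynamical_system_def shift_closed_def by blast

lemma flow_0: "\<sigma> \<in> S \<Longrightarrow> \<phi> 0 x \<sigma> = x"
  using fc_dynamical_system unfolding fc_dynamical_system_def by blast

lemma flow_add:
  "t \<ge> 0 \<Longrightarrow> \<tau> \<ge> 0 \<Longrightarrow> \<sigma> \<in> S \<Longrightarrow> \<phi> (t + \<tau>) x \<sigma> = \<phi> \<tau> (\<phi> t x \<sigma>) (\<lambda>s. \<sigma> (t + s))"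
  using fc_dynamical_system unfolding fc_dynamical_system_def by metis

lemma norm_flow_le_from:
  assumes "0 \<le> s" "s \<le> t" "\<sigma> \<in> S"
    and growth: "\<And>r y \<sigma>'. r \<in> {0..t - s} \<Longrightarrow> \<sigma>' \<in> S \<Longrightarrow> norm (\<phi> r y \<sigma>') \<le> B * norm y"
  shows "norm (\<phi> t x \<sigma>) \<le> B * norm (\<phi> s x \<sigma>)"
proof -
  have "\<phi> t x \<sigma> = \<phi> (t - s) (\<phi> s x \<sigma>) (\<lambda>r. \<sigma> (s + r))"
    using flow_add[of s "t - s" \<sigma> x] assms by simp
  then show ?thesis
    using growth shift_in_signals assms by simp
qed

lemma Lp_bounded_imp_norm_flow_le:
  assumes Lp: "Lp_bounded S \<phi> p k" and "p > 0" "k > 0"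
    and "0 \<le> a" "a < t" "\<sigma> \<in> S" "B > 0"
    and growth: "\<And>r y \<sigma>'. r \<in> {0..t - a} \<Longrightarrow> \<sigma>' \<in> S \<Longrightarrow> norm (\<phi> r y \<sigma>') \<le> B * norm y"
  shows "norm (\<phi> t x \<sigma>) \<le> B * k * norm x / (t - a) powr (1 / p)"
proof -
  let ?y = "norm (\<phi> t x \<sigma>) / B"
  have "?y powr p \<le> norm (\<phi> s x \<sigma>) powr p" if "s \<in> {a..t}" for s
  proof -
    have "norm (\<phi> t x \<sigma>) \<le> B * norm (\<phi> s x \<sigma>)"
      using that assms by (intro norm_flow_le_from[OF _ _ _ growth]) auto
    then have "?y \<le> norm (\<phi> s x \<sigma>)"
      using \<open>B > 0\<close> by (simp add: pos_divide_le_eq mult.commute)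
    then show ?thesis
      using \<open>B > 0\<close> \<open>p > 0\<close> by (intro powr_mono2) auto
  qed
  then have "ennreal ((t - a) * ?y powr p)
      \<le> (\<integral>\<^sup>+ s\<in>{0..}. ennreal (norm (\<phi> s x \<sigma>) powr p) \<partial>lborel)"
    using assms by (intro nn_integral_halfline_ge_interval) auto
  also have "\<dots> \<le> ennreal (k powr p * norm x powr p)"
    using Lp \<open>\<sigma> \<in> S\<close> unfolding Lp_bounded_def by blast
  finally have "(t - a) * ?y powr p \<le> k powr p * norm x powr p"
    by (simp add: ennreal_le_iff)
  then have "?y powr p \<le> k powr p * norm x powr p / (t - a)"
    using \<open>a < t\<close> by (simp add: pos_le_divide_eq mult.commute)
  also have "\<dots> = (k * norm x / (t - a) powr (1 / p)) powr p"
    using \<open>a < t\<close> \<open>p > 0\<close> by (simp only: powr_divide powr_mult powr_powr) simp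
  finally have "?y powr p \<le> (k * norm x / (t - a) powr (1 / p)) powr p" .
  then have "?y \<le> k * norm x / (t - a) powr (1 / p)"
    by (rule powr_le_imp_le[OF _ \<open>p > 0\<close>, rotated]) (use \<open>k > 0\<close> in simp)
  then have "B * ?y \<le> B * (k * norm x / (t - a) powr (1 / p))"
    using \<open>B > 0\<close> by (intro mult_left_mono) simp_all
  then show ?thesis
    using \<open>B > 0\<close> by simp
qed

lemma Lp_bounded_imp_uniformly_bounded:
  assumes Lp: "Lp_bounded S \<phi> p k" and "p > 0" "k > 0" "t1 > 0" "G0 > 0"
    and local_bound: "\<And>t x \<sigma>. t \<in> {0..t1} \<Longrightarrow> \<sigma> \<in> S \<Longrightarrow> norm (\<phi> t x \<sigma>) \<le> G0 * norm x"
  shows "\<exists>C>0. \<forall>t\<ge>0. \<forall>x. \<forall>\<sigma>\<in>S. norm (\<phi> t x \<sigma>) \<le> C * norm x"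
proof -
  define C where "C = G0 * max 1 (k / t1 powr (1 / p))"
  have "norm (\<phi> t x \<sigma>) \<le> C * norm x" if "t \<ge> 0" "\<sigma> \<in> S" for t x \<sigma>
  proof (cases "t \<le> t1")
    case True
    then have "norm (\<phi> t x \<sigma>) \<le> G0 * norm x"
      using local_bound that by auto
    also have "\<dots> \<le> C * norm x"
      using \<open>G0 > 0\<close> unfolding C_def by (intro mult_right_mono) auto
    finally show ?thesis .
  next
    case False
    then have "norm (\<phi> t x \<sigma>) \<le> G0 * k * norm x / (t - (t - t1)) powr (1 / p)"
      using assms that by (intro Lp_bounded_imp_norm_flow_le[OF Lp]) auto
    also have "\<dots> = G0 * (k / t1 powr (1 / p)) * norm x"
      by simp
    also have "\<dots> \<le> C * norm x"
      using \<open>G0 > 0\<close> unfolding C_def by (intro mult_right_mono mult_left_mono) auto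
    finally show ?thesis .
  qed
  moreover have "C > 0"
    using \<open>G0 > 0\<close> by (simp add: C_def)
  ultimately show ?thesis
    by blast
qed

lemma Lp_bounded_imp_halving_time:
  assumes Lp: "Lp_bounded S \<phi> p k" and "p > 0" "k > 0" "C > 0"
    and bounded: "\<And>t y \<sigma>. t \<ge> 0 \<Longrightarrow> \<sigma> \<in> S \<Longrightarrow> norm (\<phi> t y \<sigma>) \<le> C * norm y"
  shows "\<exists>T>0. \<forall>x. \<forall>\<sigma>\<in>S. norm (\<phi> T x \<sigma>) \<le> norm x / 2"
proof -
  define T where "T = (2 * C * k) powr p"
  have "T > 0"
    using \<open>C > 0\<close> \<open>k > 0\<close> by (simp add: T_def)
  have T_root: "T powr (1 / p) = 2 * C * k"
    using \<open>C > 0\<close> \<open>k > 0\<close> \<open>p > 0\<close> by (simp add: T_def powr_powr)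
  have "norm (\<phi> T x \<sigma>) \<le> norm x / 2" if "\<sigma> \<in> S" for x \<sigma>
  proof -
    have "norm (\<phi> T x \<sigma>) \<le> C * k * norm x / (T - 0) powr (1 / p)"
      using assms \<open>T > 0\<close> that by (intro Lp_bounded_imp_norm_flow_le[OF Lp]) auto
    also have "\<dots> = norm x / 2"
      using \<open>C > 0\<close> \<open>k > 0\<close> by (simp add: T_root)
    finally show ?thesis .
  qed
  with \<open>T > 0\<close> show ?thesis
    by blast
qed

lemma norm_flow_at_multiple_le:
  assumes "T \<ge> 0" "\<sigma> \<in> S"
    and halving: "\<And>y \<sigma>'. \<sigma>' \<in> S \<Longrightarrow> norm (\<phi> T y \<sigma>') \<le> norm y / 2"
  shows "norm (\<phi> (real n * T) x \<sigma>) \<le> (1 / 2) ^ n * norm x"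
proof (induction n)
  case 0
  then show ?case
    using flow_0[OF \<open>\<sigma> \<in> S\<close>] by simp
next
  case (Suc n)
  have "\<phi> (real (Suc n) * T) x \<sigma> = \<phi> T (\<phi> (real n * T) x \<sigma>) (\<lambda>s. \<sigma> (real n * T + s))"
    using flow_add[of "real n * T" T \<sigma> x] assms by (simp add: algebra_simps)
  also have "norm \<dots> \<le> norm (\<phi> (real n * T) x \<sigma>) / 2"
    using assms by (intro halving shift_in_signals) auto
  also have "\<dots> \<le> (1 / 2) ^ Suc n * norm x"
    using Suc by simp
  finally show ?case .
qed

lemma halving_imp_UGES:
  assumes "C > 0" "T > 0"
    and bounded: "\<And>t y \<sigma>. t \<ge> 0 \<Longrightarrow> \<sigma> \<in> S \<Longrightarrow> norm (\<phi> t y \<sigma>) \<le> C * norm y"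
    and halving: "\<And>y \<sigma>. \<sigma> \<in> S \<Longrightarrow> norm (\<phi> T y \<sigma>) \<le> norm y / 2"
  shows "UGES S \<phi>"
proof -
  have "norm (\<phi> t x \<sigma>) \<le> (2 * C) * exp (- (ln 2 / T) * t) * norm x"
    if "t \<ge> 0" "\<sigma> \<in> S" for t x \<sigma>
  proof -
    define n where "n = nat \<lfloor>t / T\<rfloor>"
    have "real n = of_int \<lfloor>t / T\<rfloor>"
      using that \<open>T > 0\<close> by (simp add: n_def)
    then have "real n \<le> t / T" and n_ge: "t / T - 1 \<le> real n"
      using floor_correct[of "t / T"] by linarith+
    then have n_le: "real n * T \<le> t"
      using \<open>T > 0\<close> by (simp add: le_divide_eq)
    have "real n * T \<ge> 0"
      using \<open>T > 0\<close> by simp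
    then have "\<phi> t x \<sigma> = \<phi> (t - real n * T) (\<phi> (real n * T) x \<sigma>) (\<lambda>s. \<sigma> (real n * T + s))"
      using flow_add[of "real n * T" "t - real n * T" \<sigma> x] n_le that by simp
    also have "norm \<dots> \<le> C * norm (\<phi> (real n * T) x \<sigma>)"
      using n_le \<open>real n * T \<ge> 0\<close> that by (intro bounded shift_in_signals) auto
    also have "\<dots> \<le> C * ((1 / 2) ^ n * norm x)"
      using norm_flow_at_multiple_le[OF _ \<open>\<sigma> \<in> S\<close> halving] \<open>T > 0\<close> \<open>C > 0\<close>
      by (intro mult_left_mono) auto
    also have "\<dots> \<le> C * (2 * exp (- (ln 2 / T) * t) * norm x)"
      using half_power_le_exp[OF \<open>T > 0\<close> n_ge] \<open>C > 0\<close>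
      by (intro mult_left_mono mult_right_mono) auto
    finally show ?thesis
      by (simp add: mult_ac)
  qed
  moreover have "2 * C > 0" "ln 2 / T > 0"
    using \<open>C > 0\<close> \<open>T > 0\<close> by auto
  ultimately show ?thesis
    unfolding UGES_def by blast
qed

end

theorem theorem3:
  fixes S :: "(real \<Rightarrow> 'q) set"
    and \<phi> :: "real \<Rightarrow> 'x::banach \<Rightarrow> (real \<Rightarrow> 'q) \<Rightarrow> 'x"
    and t1 G0 :: real
  assumes "fc_dynamical_system S \<phi>"
    and "t1 > 0" and "G0 > 0"
    and "\<And>t x \<sigma>. t \<in> {0..t1} \<Longrightarrow> \<sigma> \<in> S \<Longrightarrow> norm (\<phi> t x \<sigma>) \<le> G0 * norm x"
  shows "(UGES S \<phi> \<longleftrightarrow> (\<forall>p>0. \<exists>k>0. Lp_bounded S \<phi> p k))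
       \<and> ((\<forall>p>0. \<exists>k>0. Lp_bounded S \<phi> p k) \<longleftrightarrow> (\<exists>p>0. \<exists>k>0. Lp_bounded S \<phi> p k))"
proof -
  interpret fc_system S \<phi>
    by (rule fc_system.intro) fact
  have "UGES S \<phi>" if Lp: "Lp_bounded S \<phi> p k" "p > 0" "k > 0" for p k
  proof -
    obtain C where "C > 0" and bounded: "\<forall>t\<ge>0. \<forall>x. \<forall>\<sigma>\<in>S. norm (\<phi> t x \<sigma>) \<le> C * norm x"
      using Lp_bounded_imp_uniformly_bounded[OF Lp assms(2-4)] by blast
    moreover obtain T where "T > 0" and "\<forall>x. \<forall>\<sigma>\<in>S. norm (\<phi> T x \<sigma>) \<le> norm x / 2"
      using Lp_bounded_imp_halving_time[OF Lp \<open>C > 0\<close>] bounded by blast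
    ultimately show ?thesis
      using halving_imp_UGES by blast
  qed
  moreover have "\<exists>p>0. \<exists>k>0. Lp_bounded S \<phi> p k" if "\<forall>p>0. \<exists>k>0. Lp_bounded S \<phi> p k"
    using that zero_less_one by blast
  ultimately show ?thesis
    using UGES_imp_Lp_bounded by blast
qed

end
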